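(* Let $p \geq 1$. Let the coordinates of $\mathbb{R}^d$ be partitioned into $L$ groups, so that every $\mathbf{x} \in \mathbb{R}^d$ is written $\mathbf{x} = ({\mathbf{x}^{(1)}}^\top, \ldots, {\mathbf{x}^{(L)}}^\top)^\top$ with $\mathbf{x}^{(\ell)} \in \mathbb{R}^{d_\ell}$ and $\sum_{\ell=1}^L d_\ell = d$, and let $d(\cdot,\cdot)$ be a distance function (metric) applied to each group. For discrete probability measures $\mu = \sum_{i=1}^n a_i \delta_{\mathbf{x}_i}$ and $\nu = \sum_{j=1}^m b_j \delta_{\mathbf{y}_j}$ on $\mathbb{R}^d$ define $$\mathrm{FRWD}_p(\mu,\nu) = \left( \min_{\boldsymbol{\Pi} \in U(\mu,\nu)} \max_{\boldsymbol{\alpha} \in \Sigma^L} \sum_{i=1}^n \sum_{j=1}^m \pi_{ij} \sum_{\ell=1}^L \alpha_\ell\, d(\mathbf{x}_i^{(\ell)}, \mathbf{y}_j^{(\ell)})^p \right)^{1/p}.$$ Then $\mathrm{FRWD}_p$ is a distance (on discrete probability measures on $\mathbb{R}^d$).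
   Context: $U(\mu,\nu) = \{\boldsymbol{\Pi} \in \mathbb{R}_+^{n\times m} : \boldsymbol{\Pi}\mathbf{1}_m = \mathbf{a},\ \boldsymbol{\Pi}^\top \mathbf{1}_n = \mathbf{b}\}$ is the set of transport plans, where $\mathbf{a}=(a_1,\dots,a_n)^\top \in \mathbb{R}_+^n$ and $\mathbf{b}=(b_1,\dots,b_m)^\top\in\mathbb{R}_+^m$ are the weight vectors of $\mu$ and $\nu$. $\Sigma^L = \{\boldsymbol{\alpha} \in \mathbb{R}_+^L : \boldsymbol{\alpha}^\top \mathbf{1}_L = 1\}$ is the probability simplex. "Distance" means symmetric, nonnegative, zero exactly when $\mu=\nu$, and satisfying the triangle inequality. *)

theory Defs
  imports "HOL-Probability.Probability"
begin

text \<open>A point of R^d with coordinates partitioned into L groups of sizes ds 0, ..., ds (L-1)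
  is represented by its list of group blocks: x l is the block x^(l) (a real list of
  length ds l) for l < L, and x l = [] for l >= L (canonical padding).\<close>
definition grouped_points :: "nat \<Rightarrow> (nat \<Rightarrow> nat) \<Rightarrow> (nat \<Rightarrow> real list) set" where
  "grouped_points L ds = {x. (\<forall>l<L. length (x l) = ds l) \<and> (\<forall>l\<ge>L. x l = [])}"

definition is_distance_on :: "'a set \<Rightarrow> ('a \<Rightarrow> 'a \<Rightarrow> real) \<Rightarrow> bool" where
  "is_distance_on S f \<longleftrightarrow>
     (\<forall>x\<in>S. \<forall>y\<in>S. f x y \<ge> 0) \<and>
     (\<forall>x\<in>S. \<forall>y\<in>S. f x y = f y x) \<and>
     (\<forall>x\<in>S. \<forall>y\<in>S. f x y = 0 \<longleftrightarrow> x = y) \<and>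
     (\<forall>x\<in>S. \<forall>y\<in>S. \<forall>z\<in>S. f x z \<le> f x y + f y z)"

definition discrete_measures :: "nat \<Rightarrow> (nat \<Rightarrow> nat) \<Rightarrow> (nat \<Rightarrow> real list) pmf set" where
  "discrete_measures L ds = {\<mu>. finite (set_pmf \<mu>) \<and> set_pmf \<mu> \<subseteq> grouped_points L ds}"

definition transport_plans :: "'a pmf \<Rightarrow> 'b pmf \<Rightarrow> ('a \<times> 'b) pmf set" where
  "transport_plans \<mu> \<nu> = {P. map_pmf fst P = \<mu> \<and> map_pmf snd P = \<nu>}"

definition prob_simplex :: "nat \<Rightarrow> (nat \<Rightarrow> real) set" where
  "prob_simplex L = {\<alpha>. (\<forall>l<L. \<alpha> l \<ge> 0) \<and> (\<Sum>l<L. \<alpha> l) = 1}"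

definition frwd_cost ::
  "nat \<Rightarrow> (real list \<Rightarrow> real list \<Rightarrow> real) \<Rightarrow> real \<Rightarrow>
   ((nat \<Rightarrow> real list) \<times> (nat \<Rightarrow> real list)) pmf \<Rightarrow> (nat \<Rightarrow> real) \<Rightarrow> real" where
  "frwd_cost L d p P \<alpha> =
     (\<Sum>(x, y)\<in>set_pmf P. pmf P (x, y) * (\<Sum>l<L. \<alpha> l * d (x l) (y l) powr p))"

definition FRWD ::
  "nat \<Rightarrow> (real list \<Rightarrow> real list \<Rightarrow> real) \<Rightarrow> real \<Rightarrow>
   (nat \<Rightarrow> real list) pmf \<Rightarrow> (nat \<Rightarrow> real list) pmf \<Rightarrow> real" where
  "FRWD L d p \<mu> \<nu> =
     (INF P\<in>transport_plans \<mu> \<nu>. SUP \<alpha>\<in>prob_simplex L. frwd_cost L d p P \<alpha>) powr (1 / p)"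

end

theory Submission
  imports Defs
begin

text \<open>
  The objective is linear in \<alpha>, so its maximum over the simplex is attained at a vertex:
  FRWD_p(\<mu>,\<nu>)^p is the infimum over couplings \<Pi> of the largest group cost
  max_l E_\<Pi> d(x^(l), y^(l))^p.  Symmetry follows by transposing couplings, and
  FRWD_p(\<mu>,\<mu>) = 0 via the diagonal coupling.  If FRWD_p(\<mu>,\<nu>) = 0, then couplings of
  arbitrarily small cost exist; since distinct support points have a positive summed group
  cost, bounded below uniformly on the finite supports, such couplings put arbitrarily
  little mass off the diagonal, which forces \<mu> = \<nu>.  For the triangle inequality, glue
  near-optimal couplings of (\<mu>,\<nu>) and (\<nu>,\<eta>) along \<nu> and apply, group by group, the
  Minkowski-type bound: E u^p \<le> A^p and E v^p \<le> B^p imply E (u+v)^p \<le> (A+B)^p,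
  which comes from convexity of t^p applied to (u+v)/(A+B) = A/(A+B) u/A + B/(A+B) v/B.
\<close>

section \<open>Convexity of powers and a Minkowski-type bound\<close>

lemma convex_on_powr_nonneg:
  assumes "p \<ge> 1"
  shows "convex_on {0..} (\<lambda>x::real. x powr p)"
proof (rule convex_on_linorderI)
  fix t x y :: real
  assume t: "0 < t" "t < 1" and xy: "x \<in> {0..}" "y \<in> {0..}" "x < y"
  show "((1 - t) *\<^sub>R x + t *\<^sub>R y) powr p \<le> (1 - t) * x powr p + t * y powr p"
  proof (cases "x = 0")
    case True
    have "t powr p \<le> t powr 1"
      using t assms by (intro powr_mono') auto
    then have "t powr p * y powr p \<le> t * y powr p"
      using t by (intro mult_right_mono) auto
    then show ?thesis
      using True t xy assms by (simp add: powr_mult)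
  next
    case False
    then show ?thesis
      using convex_onD[OF powr_convex[OF assms], of t x y] t xy by auto
  qed
qed auto

lemma powr_add_le_weighted:
  fixes u v A B p :: real
  assumes p: "p \<ge> 1" and uv: "0 \<le> u" "0 \<le> v" and AB: "0 < A" "0 < B"
  shows "(u + v) powr p \<le>
    (A + B) powr p * (A / (A + B) * (u powr p / A powr p) + B / (A + B) * (v powr p / B powr p))"
proof -
  define t where "t = B / (A + B)"
  have t: "0 \<le> t" "t \<le> 1" "1 - t = A / (A + B)"
    using AB by (auto simp: t_def field_simps)
  have "(1 - t) * (u / A) = u / (A + B)"
    using AB by (simp add: t(3))
  moreover have "t * (v / B) = v / (A + B)"
    using AB by (simp add: t_def)
  ultimately have comb: "(1 - t) *\<^sub>R (u / A) + t *\<^sub>R (v / B) = (u + v) / (A + B)"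
    by (simp add: add_divide_distrib)
  have "((1 - t) *\<^sub>R (u / A) + t *\<^sub>R (v / B)) powr p \<le> (1 - t) * (u / A) powr p + t * (v / B) powr p"
    by (rule convex_onD[OF convex_on_powr_nonneg[OF p] t(1,2)]) (use uv AB in auto)
  then have "((u + v) / (A + B)) powr p \<le> (1 - t) * (u / A) powr p + t * (v / B) powr p"
    by (simp only: comb)
  then show ?thesis
    using uv AB unfolding t(3) by (simp add: t_def powr_divide divide_le_eq mult.commute)
qed

lemma (in prob_space) expectation_powr_triangle:
  fixes u v w :: "'a \<Rightarrow> real"
  assumes p: "p \<ge> 1" and AB: "0 < A" "0 < B"
    and int: "integrable M (\<lambda>x. u x powr p)" "integrable M (\<lambda>x. v x powr p)"
      "integrable M (\<lambda>x. w x powr p)"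
    and le: "AE x in M. 0 \<le> u x \<and> 0 \<le> v x \<and> 0 \<le> w x \<and> w x \<le> u x + v x"
    and Eu: "expectation (\<lambda>x. u x powr p) \<le> A powr p"
    and Ev: "expectation (\<lambda>x. v x powr p) \<le> B powr p"
  shows "expectation (\<lambda>x. w x powr p) \<le> (A + B) powr p"
proof -
  define a where "a = A / (A + B)"
  define b where "b = B / (A + B)"
  have ab: "0 \<le> a" "0 \<le> b" "a + b = 1"
    using AB by (auto simp: a_def b_def add_divide_distrib[symmetric])
  have "expectation (\<lambda>x. w x powr p) \<le>
      expectation (\<lambda>x. (A + B) powr p * (a * (u x powr p / A powr p) + b * (v x powr p / B powr p)))"
  proof (rule integral_mono_AE)
    show "AE x in M. w x powr p \<le>
        (A + B) powr p * (a * (u x powr p / A powr p) + b * (v x powr p / B powr p))"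
      using le
    proof eventually_elim
      case (elim x)
      then have "w x powr p \<le> (u x + v x) powr p"
        using p by (intro powr_mono2) auto
      also have "\<dots> \<le> (A + B) powr p * (a * (u x powr p / A powr p) + b * (v x powr p / B powr p))"
        unfolding a_def b_def using powr_add_le_weighted[OF p _ _ AB] elim by auto
      finally show ?case .
    qed
  qed (use int in auto)
  also have "\<dots> = (A + B) powr p *
      (a * (expectation (\<lambda>x. u x powr p) / A powr p) + b * (expectation (\<lambda>x. v x powr p) / B powr p))"
    using int by simp
  also have "\<dots> \<le> (A + B) powr p * (a * 1 + b * 1)"
    using Eu Ev AB ab by (intro mult_left_mono add_mono mult_left_mono) auto
  also have "\<dots> = (A + B) powr p"
    using ab by simp
  finally show ?thesis .
qed

section \<open>Couplings\<close>

lemma set_pmf_transport_plan: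
  assumes "P \<in> transport_plans \<mu> \<nu>"
  shows "set_pmf P \<subseteq> set_pmf \<mu> \<times> set_pmf \<nu>"
proof -
  have "set_pmf \<mu> = fst ` set_pmf P" "set_pmf \<nu> = snd ` set_pmf P"
    using assms unfolding transport_plans_def by (auto simp flip: set_map_pmf)
  then show ?thesis
    by force
qed

lemma pair_pmf_transport_plan: "pair_pmf \<mu> \<nu> \<in> transport_plans \<mu> \<nu>"
  unfolding transport_plans_def by (simp add: map_fst_pair_pmf map_snd_pair_pmf)

lemma diagonal_transport_plan: "map_pmf (\<lambda>x. (x, x)) \<mu> \<in> transport_plans \<mu> \<mu>"
  unfolding transport_plans_def by (simp add: map_pmf_comp)

lemma swap_transport_plan:
  "P \<in> transport_plans \<mu> \<nu> \<Longrightarrow> map_pmf prod.swap P \<in> transport_plans \<nu> \<mu>"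
  unfolding transport_plans_def by (auto simp: map_pmf_comp o_def)

lemma transport_plans_swap: "transport_plans \<nu> \<mu> = map_pmf prod.swap ` transport_plans \<mu> \<nu>"
proof (intro equalityI subsetI)
  fix P assume "P \<in> map_pmf prod.swap ` transport_plans \<mu> \<nu>"
  then show "P \<in> transport_plans \<nu> \<mu>"
    using swap_transport_plan by blast
next
  fix P assume "P \<in> transport_plans \<nu> \<mu>"
  then show "P \<in> map_pmf prod.swap ` transport_plans \<mu> \<nu>"
    by (intro image_eqI[where x = "map_pmf prod.swap P"] swap_transport_plan) (simp_all add: map_pmf_comp)
qed

lemma abs_pmf_diff_le_prob_off_diagonal:
  assumes "P \<in> transport_plans \<mu> \<nu>"
  shows "\<bar>pmf \<mu> a - pmf \<nu> a\<bar> \<le> measure_pmf.prob P {q. fst q \<noteq> snd q}"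
proof -
  let ?off = "{q. fst q \<noteq> snd q}"
  have le: "measure_pmf.prob P X \<le> measure_pmf.prob P Y + measure_pmf.prob P ?off"
    if "X \<subseteq> Y \<union> ?off" for X Y
  proof -
    have "measure_pmf.prob P X \<le> measure_pmf.prob P (Y \<union> ?off)"
      using that by (rule measure_pmf.finite_measure_mono) simp
    also have "\<dots> \<le> measure_pmf.prob P Y + measure_pmf.prob P ?off"
      by (rule measure_subadditive) (simp_all add: measure_pmf.emeasure_eq_measure)
    finally show ?thesis .
  qed
  have "measure_pmf.prob P (fst -` {a}) \<le> measure_pmf.prob P (snd -` {a}) + measure_pmf.prob P ?off"
    "measure_pmf.prob P (snd -` {a}) \<le> measure_pmf.prob P (fst -` {a}) + measure_pmf.prob P ?off"
    by (auto intro!: le)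
  moreover have "pmf \<mu> a = measure_pmf.prob P (fst -` {a})" "pmf \<nu> a = measure_pmf.prob P (snd -` {a})"
    using assms unfolding transport_plans_def by (auto simp: pmf_map)
  ultimately show ?thesis
    by (simp add: abs_le_iff)
qed

lemma pmf_gluing:
  fixes P :: "('a \<times> 'b) pmf" and Q :: "('b \<times> 'c) pmf"
  assumes marginal: "map_pmf snd P = map_pmf fst Q"
  obtains T :: "('a \<times> 'b \<times> 'c) pmf"
  where "map_pmf (\<lambda>(x, y, z). (x, y)) T = P" "map_pmf snd T = Q"
proof -
  \<comment> \<open>T draws (x, y) from P, then (y, z) from Q conditioned on its first coordinate being y.\<close>
  define C where "C y = cond_pmf Q {q. fst q = y}" for y
  define T where "T = bind_pmf P (\<lambda>q. map_pmf (Pair (fst q)) (C (snd q)))"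
  have set_C: "set_pmf (C y) = set_pmf Q \<inter> {q. fst q = y}" if "y \<in> set_pmf (map_pmf fst Q)" for y
    unfolding C_def using that by (intro set_cond_pmf) auto
  have "map_pmf (\<lambda>(x, y, z). (x, y)) T = bind_pmf P (\<lambda>q. map_pmf (\<lambda>r. (fst q, fst r)) (C (snd q)))"
    unfolding T_def by (simp add: map_bind_pmf map_pmf_comp split_beta o_def)
  also have "\<dots> = bind_pmf P return_pmf"
  proof (rule bind_pmf_cong[OF refl])
    fix q assume "q \<in> set_pmf P"
    then have "snd q \<in> set_pmf (map_pmf fst Q)"
      using marginal[symmetric] by auto
    then have "map_pmf (\<lambda>r. (fst q, fst r)) (C (snd q)) = map_pmf (\<lambda>_. q) (C (snd q))"
      using set_C by (intro map_pmf_cong) auto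
    then show "map_pmf (\<lambda>r. (fst q, fst r)) (C (snd q)) = return_pmf q"
      by (simp add: map_pmf_const)
  qed
  also have "\<dots> = P"
    by (simp add: bind_return_pmf')
  finally have "map_pmf (\<lambda>(x, y, z). (x, y)) T = P" .
  moreover have "map_pmf snd T = Q"
  proof -
    have "map_pmf snd T = bind_pmf (map_pmf snd P) C"
      unfolding T_def by (simp add: map_bind_pmf map_pmf_comp split_beta o_def bind_map_pmf)
    also have "\<dots> = bind_pmf (map_pmf fst Q) (\<lambda>y. cond_pmf Q {q. fst q = y})"
      unfolding marginal C_def ..
    also have "\<dots> = Q"
      by (rule bind_cond_pmf_cancel) (auto simp: measure_map_pmf vimage_def)
    finally show ?thesis .
  qed
  ultimately show ?thesis
    using that by blast
qed

lemma finite_set_pmf_transport_plan: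
  "P \<in> transport_plans \<mu> \<nu> \<Longrightarrow> finite (set_pmf \<mu>) \<Longrightarrow> finite (set_pmf \<nu>) \<Longrightarrow> finite (set_pmf P)"
  by (rule finite_subset[OF set_pmf_transport_plan]) auto

section \<open>The maximum over the simplex\<close>

lemma SUP_prob_simplex_linear:
  fixes c :: "nat \<Rightarrow> real"
  assumes "L \<ge> 1"
  shows "(SUP \<alpha>\<in>prob_simplex L. \<Sum>l<L. \<alpha> l * c l) = (MAX l\<in>{..<L}. c l)"
proof (rule cSup_eq_maximum)
  obtain m where m: "m < L" "c m = (MAX l\<in>{..<L}. c l)"
  proof -
    have "(MAX l\<in>{..<L}. c l) \<in> c ` {..<L}"
      using assms by (intro Max_in) (auto simp: lessThan_empty_iff)
    then show ?thesis
      using that by (metis imageE lessThan_iff)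
  qed
  define e where "e l = (if l = m then 1 else 0 :: real)" for l
  have "(\<Sum>l<L. e l * c l) = (\<Sum>l<L. if l = m then c l else 0)"
    by (rule sum.cong) (simp_all add: e_def)
  then have "e \<in> prob_simplex L" "(\<Sum>l<L. e l * c l) = c m"
    using m by (simp_all add: prob_simplex_def e_def)
  then show "(MAX l\<in>{..<L}. c l) \<in> (\<lambda>\<alpha>. \<Sum>l<L. \<alpha> l * c l) ` prob_simplex L"
    using m by force
next
  fix s assume "s \<in> (\<lambda>\<alpha>. \<Sum>l<L. \<alpha> l * c l) ` prob_simplex L"
  then obtain \<alpha> where \<alpha>: "\<alpha> \<in> prob_simplex L" and s: "s = (\<Sum>l<L. \<alpha> l * c l)"
    by blast
  have "(\<Sum>l<L. \<alpha> l * c l) \<le> (\<Sum>l<L. \<alpha> l * (MAX l\<in>{..<L}. c l))"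
    using \<alpha> by (intro sum_mono mult_left_mono) (auto simp: prob_simplex_def)
  also have "\<dots> = (MAX l\<in>{..<L}. c l)"
    using \<alpha> by (simp add: prob_simplex_def flip: sum_distrib_right)
  finally show "s \<le> (MAX l\<in>{..<L}. c l)"
    using s by simp
qed

definition group_cost ::
  "('b \<Rightarrow> 'b \<Rightarrow> real) \<Rightarrow> real \<Rightarrow> 'i \<Rightarrow> (('i \<Rightarrow> 'b) \<times> ('i \<Rightarrow> 'b)) pmf \<Rightarrow> real" where
  "group_cost d p l P = measure_pmf.expectation P (\<lambda>(x, y). d (x l) (y l) powr p)"

definition max_group_cost ::
  "nat \<Rightarrow> ('b \<Rightarrow> 'b \<Rightarrow> real) \<Rightarrow> real \<Rightarrow> ((nat \<Rightarrow> 'b) \<times> (nat \<Rightarrow> 'b)) pmf \<Rightarrow> real" where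
  "max_group_cost L d p P = (MAX l\<in>{..<L}. group_cost d p l P)"

definition FRWD_pow ::
  "nat \<Rightarrow> ('b \<Rightarrow> 'b \<Rightarrow> real) \<Rightarrow> real \<Rightarrow> (nat \<Rightarrow> 'b) pmf \<Rightarrow> (nat \<Rightarrow> 'b) pmf \<Rightarrow> real" where
  "FRWD_pow L d p \<mu> \<nu> = (INF P\<in>transport_plans \<mu> \<nu>. max_group_cost L d p P)"

lemma group_cost_nonneg: "0 \<le> group_cost d p l P"
  unfolding group_cost_def by (rule integral_nonneg_AE) auto

lemma frwd_cost_eq_sum_group_cost:
  assumes "finite (set_pmf P)"
  shows "frwd_cost L d p P \<alpha> = (\<Sum>l<L. \<alpha> l * group_cost d p l P)"
proof -
  have group_cost: "group_cost d p l P = (\<Sum>q\<in>set_pmf P. pmf P q * d (fst q l) (snd q l) powr p)" for l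
    unfolding group_cost_def by (subst integral_measure_pmf[OF assms]) (auto simp: split_def)
  have "frwd_cost L d p P \<alpha> = (\<Sum>q\<in>set_pmf P. \<Sum>l<L. \<alpha> l * (pmf P q * d (fst q l) (snd q l) powr p))"
    unfolding frwd_cost_def by (simp add: split_def sum_distrib_left mult.left_commute)
  also have "\<dots> = (\<Sum>l<L. \<alpha> l * group_cost d p l P)"
    unfolding group_cost by (subst sum.swap) (simp add: sum_distrib_left)
  finally show ?thesis .
qed

lemma SUP_frwd_cost_eq_max_group_cost:
  "finite (set_pmf P) \<Longrightarrow> L \<ge> 1 \<Longrightarrow>
    (SUP \<alpha>\<in>prob_simplex L. frwd_cost L d p P \<alpha>) = max_group_cost L d p P"
  by (simp add: frwd_cost_eq_sum_group_cost SUP_prob_simplex_linear max_group_cost_def)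

lemma max_group_cost_le_iff:
  "L \<ge> 1 \<Longrightarrow> max_group_cost L d p P \<le> K \<longleftrightarrow> (\<forall>l<L. group_cost d p l P \<le> K)"
  unfolding max_group_cost_def by (subst Max_le_iff) (auto simp: lessThan_empty_iff)

lemma group_cost_le_max_group_cost: "l < L \<Longrightarrow> group_cost d p l P \<le> max_group_cost L d p P"
  unfolding max_group_cost_def by (rule Max_ge) auto

lemma max_group_cost_nonneg: "L \<ge> 1 \<Longrightarrow> 0 \<le> max_group_cost L d p P"
  using group_cost_le_max_group_cost[of 0 L d p P] group_cost_nonneg[of d p 0 P] by simp

lemma FRWD_pow_nonneg: "L \<ge> 1 \<Longrightarrow> 0 \<le> FRWD_pow L d p \<mu> \<nu>"
  unfolding FRWD_pow_def using pair_pmf_transport_plan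
  by (intro cINF_greatest max_group_cost_nonneg) auto

lemma FRWD_pow_le_max_group_cost:
  "L \<ge> 1 \<Longrightarrow> P \<in> transport_plans \<mu> \<nu> \<Longrightarrow> FRWD_pow L d p \<mu> \<nu> \<le> max_group_cost L d p P"
  unfolding FRWD_pow_def using max_group_cost_nonneg
  by (intro cINF_lower bdd_belowI2) auto

lemma FRWD_pow_less_imp_transport_plan:
  assumes "FRWD_pow L d p \<mu> \<nu> < c" "L \<ge> 1"
  obtains P where "P \<in> transport_plans \<mu> \<nu>" "max_group_cost L d p P < c"
proof -
  have "transport_plans \<mu> \<nu> \<noteq> {}"
    using pair_pmf_transport_plan by blast
  moreover have "bdd_below (max_group_cost L d p ` transport_plans \<mu> \<nu>)"
    by (rule bdd_belowI2[where m = 0]) (rule max_group_cost_nonneg[OF assms(2)])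
  ultimately have "\<exists>P\<in>transport_plans \<mu> \<nu>. max_group_cost L d p P < c"
    using assms(1) cINF_less_iff unfolding FRWD_pow_def by metis
  with that show ?thesis
    by blast
qed

lemma FRWD_eq_FRWD_pow:
  assumes "L \<ge> 1" "finite (set_pmf \<mu>)" "finite (set_pmf \<nu>)"
  shows "FRWD L d p \<mu> \<nu> = FRWD_pow L d p \<mu> \<nu> powr (1 / p)"
proof -
  have "(SUP \<alpha>\<in>prob_simplex L. frwd_cost L d p P \<alpha>) = max_group_cost L d p P"
    if "P \<in> transport_plans \<mu> \<nu>" for P
    using assms finite_set_pmf_transport_plan[OF that] by (simp add: SUP_frwd_cost_eq_max_group_cost)
  then have "(INF P\<in>transport_plans \<mu> \<nu>. SUP \<alpha>\<in>prob_simplex L. frwd_cost L d p P \<alpha>) =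
      (INF P\<in>transport_plans \<mu> \<nu>. max_group_cost L d p P)"
    by (rule INF_cong[OF refl])
  then show ?thesis
    unfolding FRWD_def FRWD_pow_def by simp
qed

section \<open>The distance axioms\<close>

lemma discrete_measures_finite: "\<mu> \<in> discrete_measures L ds \<Longrightarrow> finite (set_pmf \<mu>)"
  unfolding discrete_measures_def by blast

lemma grouped_points_eqI:
  assumes "x \<in> grouped_points L ds" "y \<in> grouped_points L ds" "\<And>l. l < L \<Longrightarrow> x l = y l"
  shows "x = y"
proof
  fix l
  show "x l = y l"
    using assms by (cases "l < L") (auto simp: grouped_points_def)
qed

lemma transport_plan_grouped_points:
  assumes "\<mu> \<in> discrete_measures L ds" "\<nu> \<in> discrete_measures L ds"
    "P \<in> transport_plans \<mu> \<nu>" "q \<in> set_pmf P"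
  shows "fst q \<in> grouped_points L ds" "snd q \<in> grouped_points L ds"
  using subsetD[OF set_pmf_transport_plan[OF assms(3)] assms(4)] assms(1,2)
  unfolding discrete_measures_def by (auto simp: mem_Times_iff)

lemma FRWD_nonneg: "0 \<le> FRWD L d p \<mu> \<nu>"
  unfolding FRWD_def by simp

lemma FRWD_powr:
  assumes "p > 0" "L \<ge> 1" "\<mu> \<in> discrete_measures L ds" "\<nu> \<in> discrete_measures L ds"
  shows "FRWD L d p \<mu> \<nu> powr p = FRWD_pow L d p \<mu> \<nu>"
  using assms FRWD_pow_nonneg[OF assms(2), of d p \<mu> \<nu>]
  by (simp add: FRWD_eq_FRWD_pow discrete_measures_finite powr_powr)

context
  fixes L :: nat and ds :: "nat \<Rightarrow> nat" and d :: "real list \<Rightarrow> real list \<Rightarrow> real"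
  assumes group_distance: "\<And>l. l < L \<Longrightarrow> is_distance_on {v. length v = ds l} d"
begin

lemma
  assumes "x \<in> grouped_points L ds" "y \<in> grouped_points L ds" "l < L"
  shows group_dist_nonneg: "0 \<le> d (x l) (y l)"
    and group_dist_commute: "d (x l) (y l) = d (y l) (x l)"
    and group_dist_eq_0_iff: "d (x l) (y l) = 0 \<longleftrightarrow> x l = y l"
  using group_distance[OF assms(3)] assms unfolding is_distance_on_def grouped_points_def by auto

lemma group_dist_triangle:
  assumes "x \<in> grouped_points L ds" "y \<in> grouped_points L ds" "z \<in> grouped_points L ds" "l < L"
  shows "d (x l) (z l) \<le> d (x l) (y l) + d (y l) (z l)"
  using group_distance[OF assms(4)] assms unfolding is_distance_on_def grouped_points_def by auto

lemma FRWD_pow_self: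
  assumes "L \<ge> 1" "\<mu> \<in> discrete_measures L ds"
  shows "FRWD_pow L d p \<mu> \<mu> = 0"
proof -
  let ?P = "map_pmf (\<lambda>x. (x, x)) \<mu>"
  have "group_cost d p l ?P = 0" if "l < L" for l
  proof -
    have "AE x in measure_pmf \<mu>. d (x l) (x l) powr p = 0"
      using assms(2) that group_dist_eq_0_iff
      by (auto simp: AE_measure_pmf_iff discrete_measures_def)
    then show ?thesis
      unfolding group_cost_def by (simp add: integral_eq_zero_AE)
  qed
  then have "max_group_cost L d p ?P \<le> 0"
    using assms(1) by (simp add: max_group_cost_le_iff)
  then have "FRWD_pow L d p \<mu> \<mu> \<le> 0"
    using FRWD_pow_le_max_group_cost[OF assms(1) diagonal_transport_plan] by (rule order_trans[rotated])
  then show ?thesis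
    using FRWD_pow_nonneg[OF assms(1)] by (rule antisym)
qed

lemma max_group_cost_swap:
  assumes "\<mu> \<in> discrete_measures L ds" "\<nu> \<in> discrete_measures L ds" "P \<in> transport_plans \<mu> \<nu>"
  shows "max_group_cost L d p (map_pmf prod.swap P) = max_group_cost L d p P"
proof -
  have "group_cost d p l (map_pmf prod.swap P) = group_cost d p l P" if "l < L" for l
  proof -
    have "AE q in measure_pmf P. d (snd q l) (fst q l) powr p = d (fst q l) (snd q l) powr p"
      using transport_plan_grouped_points[OF assms] group_dist_commute that
      by (auto simp: AE_measure_pmf_iff)
    then show ?thesis
      unfolding group_cost_def by (auto simp: split_beta intro: integral_cong_AE)
  qed
  then show ?thesis
    unfolding max_group_cost_def by (metis (no_types, lifting) image_cong lessThan_iff)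
qed

lemma FRWD_pow_commute:
  assumes "\<mu> \<in> discrete_measures L ds" "\<nu> \<in> discrete_measures L ds"
  shows "FRWD_pow L d p \<nu> \<mu> = FRWD_pow L d p \<mu> \<nu>"
proof -
  have "FRWD_pow L d p \<nu> \<mu> = (INF P\<in>transport_plans \<mu> \<nu>. max_group_cost L d p (map_pmf prod.swap P))"
    unfolding FRWD_pow_def transport_plans_swap[of \<nu> \<mu>] image_image ..
  also have "\<dots> = FRWD_pow L d p \<mu> \<nu>"
    unfolding FRWD_pow_def using max_group_cost_swap[OF assms] by (rule INF_cong[OF refl])
  finally show ?thesis .
qed

lemma sum_group_dist_powr_pos:
  assumes "x \<in> grouped_points L ds" "y \<in> grouped_points L ds" "x \<noteq> y"
  shows "0 < (\<Sum>l<L. d (x l) (y l) powr p)"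
proof -
  obtain l where l: "l < L" "x l \<noteq> y l"
    using grouped_points_eqI assms by blast
  then have "0 < d (x l) (y l) powr p"
    using group_dist_eq_0_iff[OF assms(1,2)] by simp
  also have "\<dots> \<le> (\<Sum>l<L. d (x l) (y l) powr p)"
    using l by (intro member_le_sum) auto
  finally show ?thesis .
qed

lemma off_diagonal_prob_le_max_group_cost:
  assumes L: "L \<ge> 1" and \<mu>: "\<mu> \<in> discrete_measures L ds" and \<nu>: "\<nu> \<in> discrete_measures L ds"
  obtains \<delta> :: real where "\<delta> > 0"
    "\<And>P. P \<in> transport_plans \<mu> \<nu> \<Longrightarrow>
      \<delta> * measure_pmf.prob P {q. fst q \<noteq> snd q} \<le> max_group_cost L d p P"
proof -
  define h where "h q = (\<Sum>l<L. d (fst q l) (snd q l) powr p)" for q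
  have h_nonneg: "0 \<le> h q" for q
    unfolding h_def by (simp add: sum_nonneg)
  define Off where "Off = {q \<in> set_pmf \<mu> \<times> set_pmf \<nu>. fst q \<noteq> snd q}"
  \<comment> \<open>Inserting 1 keeps the minimum well defined when Off is empty.\<close>
  define c where "c = Min (insert 1 (h ` Off))"
  have "finite Off"
    unfolding Off_def using discrete_measures_finite[OF \<mu>] discrete_measures_finite[OF \<nu>] by auto
  moreover have "0 < h q" if "q \<in> Off" for q
    using that \<mu> \<nu> unfolding Off_def h_def discrete_measures_def
    by (intro sum_group_dist_powr_pos) auto
  ultimately have c: "0 < c" "\<And>q. q \<in> Off \<Longrightarrow> c \<le> h q"
    unfolding c_def by (auto intro: Min_le)
  have "c / L * measure_pmf.prob P {q. fst q \<noteq> snd q} \<le> max_group_cost L d p P"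
    if P: "P \<in> transport_plans \<mu> \<nu>" for P
  proof -
    have fin: "finite (set_pmf P)"
      using finite_set_pmf_transport_plan[OF P] discrete_measures_finite \<mu> \<nu> by blast
    have "measure_pmf.prob P {q. fst q \<noteq> snd q} = measure_pmf.prob P ({q. fst q \<noteq> snd q} \<inter> set_pmf P)"
      by (simp add: measure_Int_set_pmf)
    also have "\<dots> \<le> measure_pmf.prob P {q. c \<le> h q}"
      using set_pmf_transport_plan[OF P] c(2) unfolding Off_def
      by (intro measure_pmf.finite_measure_mono) auto
    also have "\<dots> \<le> measure_pmf.expectation P h / c"
      using integral_Markov_inequality_measure[where A = "{}" and u = h, OF integrable_measure_pmf_finite[OF fin]]
        c(1) by (simp add: h_nonneg)
    also have "measure_pmf.expectation P h = (\<Sum>l<L. group_cost d p l P)"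
      unfolding h_def group_cost_def split_beta
      by (intro Bochner_Integration.integral_sum integrable_measure_pmf_finite[OF fin])
    also have "\<dots> \<le> L * max_group_cost L d p P"
      using sum_mono[of "{..<L}" "\<lambda>l. group_cost d p l P" "\<lambda>_. max_group_cost L d p P"]
      by (simp add: group_cost_le_max_group_cost)
    finally show ?thesis
      using c(1) L by (simp add: field_simps)
  qed
  moreover have "0 < c / L"
    using c(1) L by simp
  ultimately show ?thesis
    using that by blast
qed

lemma FRWD_pow_eq_0_imp_eq:
  assumes L: "L \<ge> 1" and \<mu>: "\<mu> \<in> discrete_measures L ds" and \<nu>: "\<nu> \<in> discrete_measures L ds"
    and zero: "FRWD_pow L d p \<mu> \<nu> = 0"
  shows "\<mu> = \<nu>"
proof (rule pmf_eqI)
  fix a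
  obtain \<delta> :: real where \<delta>: "\<delta> > 0"
    "\<And>P. P \<in> transport_plans \<mu> \<nu> \<Longrightarrow>
      \<delta> * measure_pmf.prob P {q. fst q \<noteq> snd q} \<le> max_group_cost L d p P"
    using off_diagonal_prob_le_max_group_cost[OF L \<mu> \<nu>] by blast
  have "\<delta> * \<bar>pmf \<mu> a - pmf \<nu> a\<bar> \<le> FRWD_pow L d p \<mu> \<nu>"
    unfolding FRWD_pow_def
  proof (rule cINF_greatest)
    show "transport_plans \<mu> \<nu> \<noteq> {}"
      using pair_pmf_transport_plan by blast
  next
    fix P assume P: "P \<in> transport_plans \<mu> \<nu>"
    have "\<delta> * \<bar>pmf \<mu> a - pmf \<nu> a\<bar> \<le> \<delta> * measure_pmf.prob P {q. fst q \<noteq> snd q}"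
      using \<delta>(1) abs_pmf_diff_le_prob_off_diagonal[OF P] by simp
    then show "\<delta> * \<bar>pmf \<mu> a - pmf \<nu> a\<bar> \<le> max_group_cost L d p P"
      using \<delta>(2)[OF P] by linarith
  qed
  then show "pmf \<mu> a = pmf \<nu> a"
    using zero \<delta>(1) by (simp add: mult_le_0_iff)
qed

lemma FRWD_pow_triangle:
  assumes p: "p \<ge> 1" and L: "L \<ge> 1"
    and \<mu>: "\<mu> \<in> discrete_measures L ds" and \<nu>: "\<nu> \<in> discrete_measures L ds"
    and \<eta>: "\<eta> \<in> discrete_measures L ds"
    and AB: "0 < A" "0 < B"
    and less: "FRWD_pow L d p \<mu> \<nu> < A powr p" "FRWD_pow L d p \<nu> \<eta> < B powr p"
  shows "FRWD_pow L d p \<mu> \<eta> \<le> (A + B) powr p"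
proof -
  obtain P where P: "P \<in> transport_plans \<mu> \<nu>" "max_group_cost L d p P < A powr p"
    using FRWD_pow_less_imp_transport_plan[OF less(1) L] .
  obtain Q where Q: "Q \<in> transport_plans \<nu> \<eta>" "max_group_cost L d p Q < B powr p"
    using FRWD_pow_less_imp_transport_plan[OF less(2) L] .
  have "map_pmf snd P = map_pmf fst Q"
    using P(1) Q(1) by (simp add: transport_plans_def)
  then obtain T where TP: "map_pmf (\<lambda>(x, y, z). (x, y)) T = P" and TQ: "map_pmf snd T = Q"
    by (rule pmf_gluing)
  define R where "R = map_pmf (\<lambda>(x, y, z). (x, z)) T"
  have R: "R \<in> transport_plans \<mu> \<eta>"
    using P(1) Q(1) unfolding R_def transport_plans_def TP[symmetric] TQ[symmetric]
    by (simp add: map_pmf_comp split_beta)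
  have in_P: "(fst t, fst (snd t)) \<in> set_pmf P" and in_Q: "snd t \<in> set_pmf Q"
    if "t \<in> set_pmf T" for t
    using that unfolding TP[symmetric] TQ[symmetric] by (auto simp: split_beta)
  have finite_T: "finite (set_pmf T)"
  proof (rule finite_subset)
    show "set_pmf T \<subseteq> fst ` set_pmf P \<times> set_pmf Q"
      using in_P in_Q by (force simp: mem_Times_iff)
    show "finite (fst ` set_pmf P \<times> set_pmf Q)"
      using finite_set_pmf_transport_plan P(1) Q(1) discrete_measures_finite \<mu> \<nu> \<eta> by blast
  qed
  have grouped: "fst t \<in> grouped_points L ds" "fst (snd t) \<in> grouped_points L ds"
    "snd (snd t) \<in> grouped_points L ds" if "t \<in> set_pmf T" for t
    using transport_plan_grouped_points[OF \<mu> \<nu> P(1) in_P[OF that]]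
      transport_plan_grouped_points[OF \<nu> \<eta> Q(1) in_Q[OF that]] by simp_all
  have "group_cost d p l R \<le> (A + B) powr p" if l: "l < L" for l
  proof -
    have "group_cost d p l P \<le> A powr p" "group_cost d p l Q \<le> B powr p"
      using group_cost_le_max_group_cost[OF l] P(2) Q(2) by (meson less_imp_le order_trans)+
    then have "measure_pmf.expectation T (\<lambda>t. d (fst t l) (snd (snd t) l) powr p) \<le> (A + B) powr p"
      unfolding TP[symmetric] TQ[symmetric] group_cost_def
      using group_dist_nonneg[OF _ _ l] group_dist_triangle[OF _ _ _ l] grouped
      by (intro prob_space.expectation_powr_triangle[OF prob_space_measure_pmf p AB]
            integrable_measure_pmf_finite[OF finite_T])
         (auto simp: split_beta AE_measure_pmf_iff)
    then show ?thesis
      unfolding R_def group_cost_def by (simp add: split_beta)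
  qed
  then have "max_group_cost L d p R \<le> (A + B) powr p"
    using L by (simp add: max_group_cost_le_iff)
  then show ?thesis
    by (rule order_trans[OF FRWD_pow_le_max_group_cost[OF L R]])
qed

lemma FRWD_commute:
  assumes "L \<ge> 1" "\<mu> \<in> discrete_measures L ds" "\<nu> \<in> discrete_measures L ds"
  shows "FRWD L d p \<nu> \<mu> = FRWD L d p \<mu> \<nu>"
  using assms FRWD_pow_commute[OF assms(2,3)]
  by (simp add: FRWD_eq_FRWD_pow discrete_measures_finite)

lemma FRWD_eq_0_iff:
  assumes "L \<ge> 1" "\<mu> \<in> discrete_measures L ds" "\<nu> \<in> discrete_measures L ds"
  shows "FRWD L d p \<mu> \<nu> = 0 \<longleftrightarrow> \<mu> = \<nu>"
  using assms FRWD_pow_eq_0_imp_eq[OF assms] FRWD_pow_self[OF assms(1,2)]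
  by (auto simp: FRWD_eq_FRWD_pow discrete_measures_finite)

lemma FRWD_triangle:
  assumes p: "p \<ge> 1" and L: "L \<ge> 1" and \<mu>: "\<mu> \<in> discrete_measures L ds"
    and \<nu>: "\<nu> \<in> discrete_measures L ds" and \<eta>: "\<eta> \<in> discrete_measures L ds"
  shows "FRWD L d p \<mu> \<eta> \<le> FRWD L d p \<mu> \<nu> + FRWD L d p \<nu> \<eta>"
proof (rule field_le_epsilon)
  \<comment> \<open>Near-optimal couplings are only available for strict upper bounds, hence the slack e.\<close>
  fix e :: real
  assume e: "0 < e"
  define a where "a = FRWD L d p \<mu> \<nu> + e / 2"
  define b where "b = FRWD L d p \<nu> \<eta> + e / 2"
  have p0: "0 < p"
    using p by simp
  have ab: "0 < a" "0 < b"
    using e FRWD_nonneg unfolding a_def b_def by (metis add_nonneg_pos half_gt_zero)+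
  have "FRWD_pow L d p \<mu> \<nu> = FRWD L d p \<mu> \<nu> powr p"
    using FRWD_powr[OF p0 L \<mu> \<nu>] ..
  also have "\<dots> < a powr p"
    unfolding a_def using e p0 FRWD_nonneg by (intro powr_less_mono2) auto
  finally have less_a: "FRWD_pow L d p \<mu> \<nu> < a powr p" .
  have "FRWD_pow L d p \<nu> \<eta> = FRWD L d p \<nu> \<eta> powr p"
    using FRWD_powr[OF p0 L \<nu> \<eta>] ..
  also have "\<dots> < b powr p"
    unfolding b_def using e p0 FRWD_nonneg by (intro powr_less_mono2) auto
  finally have less_b: "FRWD_pow L d p \<nu> \<eta> < b powr p" .
  from less_a less_b have "FRWD_pow L d p \<mu> \<eta> \<le> (a + b) powr p"
    by (rule FRWD_pow_triangle[OF p L \<mu> \<nu> \<eta> ab])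
  then have "FRWD_pow L d p \<mu> \<eta> powr (1 / p) \<le> ((a + b) powr p) powr (1 / p)"
    using p FRWD_pow_nonneg[OF L] by (intro powr_mono2) auto
  then have "FRWD L d p \<mu> \<eta> \<le> ((a + b) powr p) powr (1 / p)"
    using FRWD_eq_FRWD_pow[OF L discrete_measures_finite[OF \<mu>] discrete_measures_finite[OF \<eta>]]
    by simp
  also have "\<dots> = FRWD L d p \<mu> \<nu> + FRWD L d p \<nu> \<eta> + e"
    using p ab by (simp add: powr_powr a_def b_def)
  finally show "FRWD L d p \<mu> \<eta> \<le> FRWD L d p \<mu> \<nu> + FRWD L d p \<nu> \<eta> + e" .
qed

end

theorem proposition1:
  fixes L :: nat and ds :: "nat \<Rightarrow> nat" and p :: real
    and d :: "real list \<Rightarrow> real list \<Rightarrow> real"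
  assumes "p \<ge> 1"
    and "L \<ge> 1"
    and "\<And>l. l < L \<Longrightarrow> is_distance_on {v. length v = ds l} d"
  shows "is_distance_on (discrete_measures L ds) (FRWD L d p)"
  unfolding is_distance_on_def
  using FRWD_nonneg FRWD_commute[OF assms(3,2)] FRWD_eq_0_iff[OF assms(3,2)]
    FRWD_triangle[OF assms(3,1,2)]
  by auto

end
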